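(* Let $0\le z<t\le d\le n$ and consider any $((t,n;z))_q$ QSS scheme whose secret consists of $m$ qudits. Then $$\mathrm{CC}_n(d)\geq\frac{d\,m}{d-z}.$$
   Context: A QSS scheme on $n$ parties is an encoding of a quantum secret into $n$ shares, share $j$ given to party $j\in[n]$. A set $P\subseteq[n]$ is authorized if the secret can be recovered from the shares of the parties in $P$, and unauthorized if those shares contain no information about the secret. A $((t,n;z))_q$ QSS scheme is one in which every set of at least $t$ parties is authorized, every set of at most $z$ parties is unauthorized, and the secret consists of $m$ qudits and the shares of qudits, all of dimension $q$. For an authorized set $A$, a fixed (a priori) portion of each share of a party in $A$ is sent to a combiner, and $\mathrm{CC}_n(A)=\sum_{j\in A}h_{j,A}$ with $h_{j,A}$ the number of qudits sent by party $j$. For $t\le d\le n$, $\mathrm{CC}_n(d)=\max_{A\subseteq[n],|A|=d}\mathrm{CC}_n(A)$. *)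

theory Defs
  imports Complex_Main "HOL-Library.FuncSet"
begin

text \<open>A register is a finite set R of labels, each label carrying one qudit of
dimension q. Operators on (or between) registers are complex matrices
indexed by basis states.\<close>

type_synonym ('a, 'b) qop = "('b \<Rightarrow> nat) \<Rightarrow> ('a \<Rightarrow> nat) \<Rightarrow> complex"

definition qbasis :: "nat \<Rightarrow> 'a set \<Rightarrow> ('a \<Rightarrow> nat) set" where
  "qbasis q R = PiE R (\<lambda>_. {..<q})"

definition is_density :: "nat \<Rightarrow> 'a set \<Rightarrow> ('a, 'a) qop \<Rightarrow> bool" where
  "is_density q R \<rho> \<longleftrightarrow>
     (\<forall>v :: ('a \<Rightarrow> nat) \<Rightarrow> complex.
        let Q = (\<Sum>x\<in>qbasis q R. \<Sum>y\<in>qbasis q R. cnj (v x) * \<rho> x y * v y)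
        in Im Q = 0 \<and> Re Q \<ge> 0) \<and>
     (\<Sum>x\<in>qbasis q R. \<rho> x x) = 1"

text \<open>Equality of operators on register R (only basis entries matter).\<close>
definition op_eq :: "nat \<Rightarrow> 'a set \<Rightarrow> ('a, 'a) qop \<Rightarrow> ('a, 'a) qop \<Rightarrow> bool" where
  "op_eq q R A B \<longleftrightarrow> (\<forall>x\<in>qbasis q R. \<forall>y\<in>qbasis q R. A x y = B x y)"

text \<open>Quantum channel (CPTP map) from register R to register S, given by a finite
list of Kraus operators satisfying the completeness relation.\<close>
definition is_channel :: "nat \<Rightarrow> 'a set \<Rightarrow> 'b set \<Rightarrow> ('a, 'b) qop list \<Rightarrow> bool" where
  "is_channel q R S Ks \<longleftrightarrow>
     (\<forall>x\<in>qbasis q R. \<forall>x'\<in>qbasis q R.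
        (\<Sum>K\<leftarrow>Ks. \<Sum>y\<in>qbasis q S. cnj (K y x) * K y x') = (if x = x' then 1 else 0))"

definition apply_channel ::
  "nat \<Rightarrow> 'a set \<Rightarrow> 'b set \<Rightarrow> ('a, 'b) qop list \<Rightarrow> ('a, 'a) qop \<Rightarrow> ('b, 'b) qop" where
  "apply_channel q R S Ks \<rho> = (\<lambda>y y'.
     \<Sum>K\<leftarrow>Ks. \<Sum>x\<in>qbasis q R. \<Sum>x'\<in>qbasis q R. K y x * \<rho> x x' * cnj (K y' x'))"

text \<open>Partial trace of an operator on register S, keeping the subregister T \<subseteq> S
(tracing out S - T).\<close>
definition merge_basis :: "'a set \<Rightarrow> ('a \<Rightarrow> nat) \<Rightarrow> ('a \<Rightarrow> nat) \<Rightarrow> 'a \<Rightarrow> nat" where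
  "merge_basis T u w = (\<lambda>l. if l \<in> T then u l else w l)"

definition ptrace :: "nat \<Rightarrow> 'a set \<Rightarrow> 'a set \<Rightarrow> ('a, 'a) qop \<Rightarrow> ('a, 'a) qop" where
  "ptrace q S T \<rho> = (\<lambda>u u'.
     \<Sum>w\<in>qbasis q (S - T). \<rho> (merge_basis T u w) (merge_basis T u' w))"

text \<open>Party j holds share j
consisting of s j qudits, labelled (j, l) with l < s j. The encoding is a
quantum channel E from the secret register to all shares.\<close>

definition secret_reg :: "nat \<Rightarrow> nat set" where
  "secret_reg m = {..<m}"

definition share_reg :: "(nat \<Rightarrow> nat) \<Rightarrow> nat set \<Rightarrow> (nat \<times> nat) set" where
  "share_reg s P = Sigma P (\<lambda>j. {..<s j})"

definition parties :: "nat \<Rightarrow> nat set" where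
  "parties n = {1..n}"

definition recoverable_from ::
  "nat \<Rightarrow> nat \<Rightarrow> nat \<Rightarrow> (nat \<Rightarrow> nat) \<Rightarrow> (nat, nat \<times> nat) qop list \<Rightarrow> (nat \<times> nat) set \<Rightarrow> bool" where
  "recoverable_from q n m s E T \<longleftrightarrow>
     (\<exists>D :: (nat \<times> nat, nat) qop list. is_channel q T (secret_reg m) D \<and>
        (\<forall>\<rho>. is_density q (secret_reg m) \<rho> \<longrightarrow>
           op_eq q (secret_reg m)
             (apply_channel q T (secret_reg m) D
                (ptrace q (share_reg s (parties n)) T
                   (apply_channel q (secret_reg m) (share_reg s (parties n)) E \<rho>)))
             \<rho>))"

definition authorized ::
  "nat \<Rightarrow> nat \<Rightarrow> nat \<Rightarrow> (nat \<Rightarrow> nat) \<Rightarrow> (nat, nat \<times> nat) qop list \<Rightarrow> nat set \<Rightarrow> bool" where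
  "authorized q n m s E P \<longleftrightarrow> recoverable_from q n m s E (share_reg s P)"

definition unauthorized ::
  "nat \<Rightarrow> nat \<Rightarrow> nat \<Rightarrow> (nat \<Rightarrow> nat) \<Rightarrow> (nat, nat \<times> nat) qop list \<Rightarrow> nat set \<Rightarrow> bool" where
  "unauthorized q n m s E P \<longleftrightarrow>
     (\<forall>\<rho> \<sigma>. is_density q (secret_reg m) \<rho> \<longrightarrow> is_density q (secret_reg m) \<sigma> \<longrightarrow>
        op_eq q (share_reg s P)
          (ptrace q (share_reg s (parties n)) (share_reg s P)
             (apply_channel q (secret_reg m) (share_reg s (parties n)) E \<rho>))
          (ptrace q (share_reg s (parties n)) (share_reg s P)
             (apply_channel q (secret_reg m) (share_reg s (parties n)) E \<sigma>)))"

definition is_QSS ::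
  "nat \<Rightarrow> nat \<Rightarrow> nat \<Rightarrow> nat \<Rightarrow> nat \<Rightarrow> (nat \<Rightarrow> nat) \<Rightarrow> (nat, nat \<times> nat) qop list \<Rightarrow> bool" where
  "is_QSS q t n z m s E \<longleftrightarrow>
     is_channel q (secret_reg m) (share_reg s (parties n)) E \<and>
     (\<forall>P. P \<subseteq> parties n \<longrightarrow> card P \<ge> t \<longrightarrow> authorized q n m s E P) \<and>
     (\<forall>P. P \<subseteq> parties n \<longrightarrow> card P \<le> z \<longrightarrow> unauthorized q n m s E P)"

text \<open>Communication (reconstruction) protocol: for every authorized set A, a fixed
portion H A of the qudits of the shares of the parties in A (h_{j,A} qudits of
share j, namely those in H A with first component j) is sent to the combiner,
who recovers the secret from these qudits alone.\<close>
definition is_comm_protocol ::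
  "nat \<Rightarrow> nat \<Rightarrow> nat \<Rightarrow> (nat \<Rightarrow> nat) \<Rightarrow> (nat, nat \<times> nat) qop list
   \<Rightarrow> (nat set \<Rightarrow> (nat \<times> nat) set) \<Rightarrow> bool" where
  "is_comm_protocol q n m s E H \<longleftrightarrow>
     (\<forall>A. A \<subseteq> parties n \<longrightarrow> authorized q n m s E A \<longrightarrow>
        H A \<subseteq> share_reg s A \<and> recoverable_from q n m s E (H A))"

definition h_sent :: "(nat set \<Rightarrow> (nat \<times> nat) set) \<Rightarrow> nat \<Rightarrow> nat set \<Rightarrow> nat" where
  "h_sent H j A = card {l. (j, l) \<in> H A}"

definition CC_set :: "(nat set \<Rightarrow> (nat \<times> nat) set) \<Rightarrow> nat set \<Rightarrow> nat" where
  "CC_set H A = (\<Sum>j\<in>A. h_sent H j A)"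

definition CC :: "nat \<Rightarrow> (nat set \<Rightarrow> (nat \<times> nat) set) \<Rightarrow> nat \<Rightarrow> nat" where
  "CC n H d = Max {CC_set H A | A. A \<subseteq> parties n \<and> card A = d}"

end

theory Submission
  imports Defs "HOL-Analysis.Convex"
begin

text \<open>Fix an authorized set \<open>A\<close> of \<open>d\<close> parties and a subset \<open>Z\<close> of \<open>z\<close> of them, and let the
  secret be entangled with a reference system of dimension \<open>q\<^sup>m\<close>. Since the combiner recovers the
  secret from the qudits \<open>H A\<close>, the reference is decoupled from everything outside \<open>H A\<close>
  (Knill--Laflamme); since \<open>Z\<close> is unauthorized, it is also decoupled from the shares of \<open>Z\<close>.
  Comparing purities (squared Hilbert--Schmidt norms) across these two cuts shows that only the
  qudits of \<open>H A\<close> outside the shares of \<open>Z\<close> can carry the reference, so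
  \<open>m \<le> (\<Sum>j\<in>A - Z. h_sent H j A)\<close>. Averaging over all \<open>z\<close>-subsets \<open>Z\<close> of \<open>A\<close> gives
  \<open>(d - z) * CC_set H A \<ge> d * m\<close>.\<close>

definition hs_norm_sq :: "'a set \<Rightarrow> ('a \<Rightarrow> 'a \<Rightarrow> complex) \<Rightarrow> real" where
  "hs_norm_sq A M = (\<Sum>a\<in>A. \<Sum>b\<in>A. (cmod (M a b))\<^sup>2)"

definition marginal :: "'q set \<Rightarrow> ('p \<Rightarrow> 'q \<Rightarrow> complex) \<Rightarrow> 'p \<Rightarrow> 'p \<Rightarrow> complex" where
  "marginal Q \<Psi> = (\<lambda>p p'. \<Sum>q\<in>Q. \<Psi> p q * cnj (\<Psi> p' q))"

lemma sum_swap_inner_pairs: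
  "(\<Sum>a\<in>A. \<Sum>b\<in>B. \<Sum>c\<in>C. \<Sum>d\<in>D. f a b c d) = (\<Sum>c\<in>C. \<Sum>d\<in>D. \<Sum>a\<in>A. \<Sum>b\<in>B. f a b c d)"
proof -
  have "(\<Sum>a\<in>A. \<Sum>b\<in>B. \<Sum>c\<in>C. \<Sum>d\<in>D. f a b c d) = (\<Sum>a\<in>A. \<Sum>c\<in>C. \<Sum>d\<in>D. \<Sum>b\<in>B. f a b c d)"
    by (simp only: sum.swap[of _ B])
  also have "\<dots> = (\<Sum>c\<in>C. \<Sum>d\<in>D. \<Sum>a\<in>A. \<Sum>b\<in>B. f a b c d)"
    by (simp only: sum.swap[of _ A])
  finally show ?thesis .
qed

text \<open>Both sides equal \<open>tr ((\<Psi> \<Psi>\<^sup>*)\<^sup>2) = tr ((\<Psi>\<^sup>* \<Psi>)\<^sup>2)\<close>.\<close>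
lemma hs_norm_sq_marginal_swap:
  "hs_norm_sq P (marginal Q \<Psi>) = hs_norm_sq Q (marginal P (\<lambda>q p. \<Psi> p q))"
proof -
  have "complex_of_real (hs_norm_sq P (marginal Q \<Psi>)) =
      (\<Sum>p\<in>P. \<Sum>p'\<in>P. \<Sum>q\<in>Q. \<Sum>q'\<in>Q. \<Psi> p q * cnj (\<Psi> p' q) * (cnj (\<Psi> p q') * \<Psi> p' q'))"
    unfolding hs_norm_sq_def marginal_def of_real_sum complex_norm_square
    by (simp add: sum_product cnj_sum)
  also have "\<dots> = (\<Sum>q\<in>Q. \<Sum>q'\<in>Q. \<Sum>p\<in>P. \<Sum>p'\<in>P. \<Psi> p q * cnj (\<Psi> p q') * (cnj (\<Psi> p' q) * \<Psi> p' q'))"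
    by (subst sum_swap_inner_pairs) (simp add: mult_ac)
  also have "\<dots> = complex_of_real (hs_norm_sq Q (marginal P (\<lambda>q p. \<Psi> p q)))"
    unfolding hs_norm_sq_def marginal_def of_real_sum complex_norm_square
    by (simp add: sum_product cnj_sum)
  finally show ?thesis by (simp only: of_real_eq_iff)
qed

lemma hs_norm_sq_partial_trace_le:
  assumes "finite B"
  shows "hs_norm_sq E (\<lambda>e e'. \<Sum>b\<in>B. \<rho> (b, e) (b, e')) \<le> real (card B) * hs_norm_sq (B \<times> E) \<rho>"
proof -
  have "hs_norm_sq E (\<lambda>e e'. \<Sum>b\<in>B. \<rho> (b, e) (b, e'))
      \<le> (\<Sum>e\<in>E. \<Sum>e'\<in>E. real (card B) * (\<Sum>b\<in>B. (cmod (\<rho> (b, e) (b, e')))\<^sup>2))"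
    unfolding hs_norm_sq_def
  proof (intro sum_mono)
    fix e e'
    have "(cmod (\<Sum>b\<in>B. \<rho> (b, e) (b, e')))\<^sup>2 \<le> (\<Sum>b\<in>B. cmod (\<rho> (b, e) (b, e')))\<^sup>2"
      by (intro power_mono norm_sum) simp
    also have "\<dots> \<le> (\<Sum>b\<in>B. (cmod (\<rho> (b, e) (b, e')))\<^sup>2) * real (card B)"
      by (rule sum_squared_le_sum_of_squares)
    finally show "(cmod (\<Sum>b\<in>B. \<rho> (b, e) (b, e')))\<^sup>2
        \<le> real (card B) * (\<Sum>b\<in>B. (cmod (\<rho> (b, e) (b, e')))\<^sup>2)"
      by (simp only: mult.commute)
  qed
  also have "\<dots> \<le> (\<Sum>e\<in>E. \<Sum>e'\<in>E. real (card B) * (\<Sum>b\<in>B. \<Sum>b'\<in>B. (cmod (\<rho> (b, e) (b', e')))\<^sup>2))"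
    using assms by (intro sum_mono mult_left_mono) (auto intro: member_le_sum)
  also have "\<dots> = real (card B) * (\<Sum>e\<in>E. \<Sum>e'\<in>E. \<Sum>b\<in>B. \<Sum>b'\<in>B. (cmod (\<rho> (b, e) (b', e')))\<^sup>2)"
    by (simp only: sum_distrib_left)
  also have "(\<Sum>e\<in>E. \<Sum>e'\<in>E. \<Sum>b\<in>B. \<Sum>b'\<in>B. (cmod (\<rho> (b, e) (b', e')))\<^sup>2)
      = (\<Sum>b\<in>B. \<Sum>b'\<in>B. \<Sum>e\<in>E. \<Sum>e'\<in>E. (cmod (\<rho> (b, e) (b', e')))\<^sup>2)"
    by (rule sum_swap_inner_pairs)
  also have "\<dots> = (\<Sum>b\<in>B. \<Sum>e\<in>E. \<Sum>b'\<in>B. \<Sum>e'\<in>E. (cmod (\<rho> (b, e) (b', e')))\<^sup>2)"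
    by (rule sum.cong[OF refl], rule sum.swap)
  also have "\<dots> = hs_norm_sq (B \<times> E) \<rho>"
    by (simp only: hs_norm_sq_def sum.cartesian_product')
  finally show ?thesis .
qed

lemma hs_norm_sq_pos:
  assumes "finite A" and "(\<Sum>a\<in>A. M a a) \<noteq> 0"
  shows "0 < hs_norm_sq A M"
proof -
  obtain a where a: "a \<in> A" "M a a \<noteq> 0"
    using assms(2) sum.neutral[of A "\<lambda>a. M a a"] by blast
  have "0 < (cmod (M a a))\<^sup>2" using a by simp
  also have "\<dots> \<le> (\<Sum>b\<in>A. (cmod (M a b))\<^sup>2)"
    using a assms(1) by (intro member_le_sum) auto
  also have "\<dots> \<le> hs_norm_sq A M"
    unfolding hs_norm_sq_def using a assms(1) by (intro member_le_sum sum_nonneg) auto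
  finally show ?thesis .
qed

lemma hs_norm_sq_nonneg: "0 \<le> hs_norm_sq A M"
  by (simp add: hs_norm_sq_def sum_nonneg)

text \<open>Read \<open>\<Psi> x b c e\<close> as a pure state of a reference system \<open>X\<close> and three systems
  \<open>B\<close>, \<open>C\<close>, \<open>E\<close>. If \<open>XC\<close> is in a product state, its purity equals that of \<open>BE\<close>,
  and tracing out \<open>B\<close> loses at most a factor \<open>|B|\<close> of purity.\<close>
lemma card_mult_hs_norm_sq_le:
  fixes \<Psi> :: "'x \<Rightarrow> 'b \<Rightarrow> 'c \<Rightarrow> 'e \<Rightarrow> complex"
  assumes "finite X" and "finite B"
    and decoupled: "\<And>x y c c'. x \<in> X \<Longrightarrow> y \<in> X \<Longrightarrow> c \<in> C \<Longrightarrow> c' \<in> C \<Longrightarrow>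
      (\<Sum>b\<in>B. \<Sum>e\<in>E. \<Psi> x b c e * cnj (\<Psi> y b c' e)) = (if x = y then \<tau> c c' else 0)"
    and reduced: "\<And>x e e'. x \<in> X \<Longrightarrow> e \<in> E \<Longrightarrow> e' \<in> E \<Longrightarrow>
      (\<Sum>b\<in>B. \<Sum>c\<in>C. \<Psi> x b c e * cnj (\<Psi> x b c e')) = \<omega> e e'"
  shows "real (card X) * hs_norm_sq E \<omega> \<le> real (card B) * hs_norm_sq C \<tau>"
proof -
  define N where "N = real (card X)"
  define \<Phi> where "\<Phi> xc be = \<Psi> (fst xc) (fst be) (snd xc) (snd be)" for xc be
  define \<rho> where "\<rho> = marginal (X \<times> C) (\<lambda>be xc. \<Phi> xc be)"
  have "hs_norm_sq (X \<times> C) (marginal (B \<times> E) \<Phi>)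
      = (\<Sum>x\<in>X. \<Sum>c\<in>C. \<Sum>y\<in>X. \<Sum>c'\<in>C. if x = y then (cmod (\<tau> c c'))\<^sup>2 else 0)"
    unfolding hs_norm_sq_def sum.cartesian_product'
    by (intro sum.cong refl) (simp add: marginal_def \<Phi>_def sum.cartesian_product' decoupled)
  also have "\<dots> = (\<Sum>x\<in>X. \<Sum>c\<in>C. \<Sum>c'\<in>C. (cmod (\<tau> c c'))\<^sup>2)"
  proof (intro sum.cong refl)
    fix x c assume "x \<in> X"
    then show "(\<Sum>y\<in>X. \<Sum>c'\<in>C. if x = y then (cmod (\<tau> c c'))\<^sup>2 else 0) = (\<Sum>c'\<in>C. (cmod (\<tau> c c'))\<^sup>2)"
      using \<open>finite X\<close> by (subst sum.swap) simp
  qed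
  also have "\<dots> = N * hs_norm_sq C \<tau>"
    by (simp add: N_def hs_norm_sq_def)
  finally have purity_XC: "hs_norm_sq (X \<times> C) (marginal (B \<times> E) \<Phi>) = N * hs_norm_sq C \<tau>" .
  have trace_B: "(\<Sum>b\<in>B. \<rho> (b, e) (b, e')) = N * \<omega> e e'" if "e \<in> E" "e' \<in> E" for e e'
  proof -
    have "(\<Sum>b\<in>B. \<rho> (b, e) (b, e')) = (\<Sum>x\<in>X. \<Sum>b\<in>B. \<Sum>c\<in>C. \<Psi> x b c e * cnj (\<Psi> x b c e'))"
      unfolding \<rho>_def marginal_def \<Phi>_def sum.cartesian_product' by (simp add: sum.swap[of _ B X])
    also have "\<dots> = N * \<omega> e e'"
      using reduced that by (simp add: N_def)
    finally show ?thesis .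
  qed
  have "N * (N * hs_norm_sq E \<omega>) = hs_norm_sq E (\<lambda>e e'. \<Sum>b\<in>B. \<rho> (b, e) (b, e'))"
    unfolding hs_norm_sq_def
    by (simp add: trace_B norm_mult power_mult_distrib sum_distrib_left N_def power2_eq_square
        mult_ac)
  also have "\<dots> \<le> real (card B) * hs_norm_sq (B \<times> E) \<rho>"
    by (rule hs_norm_sq_partial_trace_le[OF \<open>finite B\<close>])
  also have "hs_norm_sq (B \<times> E) \<rho> = N * hs_norm_sq C \<tau>"
    unfolding \<rho>_def purity_XC[symmetric] by (rule hs_norm_sq_marginal_swap[symmetric])
  finally have "N * (N * hs_norm_sq E \<omega>) \<le> N * (real (card B) * hs_norm_sq C \<tau>)"
    by (simp add: mult_ac)
  moreover have "0 \<le> real (card B) * hs_norm_sq C \<tau>"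
    by (simp add: hs_norm_sq_nonneg)
  ultimately show ?thesis
    unfolding N_def by (cases "card X = 0") (simp_all add: mult_le_cancel_left)
qed

text \<open>If the reference \<open>X\<close> decouples both from \<open>C\<close> and from \<open>E\<close>, the two purity bounds
  above multiply to \<open>|X|\<^sup>2 \<le> |B|\<^sup>2\<close>: all information about \<open>X\<close> sits in \<open>B\<close>.\<close>
lemma card_le_of_decoupled:
  fixes \<Psi> :: "'x \<Rightarrow> 'b \<Rightarrow> 'c \<Rightarrow> 'e \<Rightarrow> complex"
  assumes "finite X" "finite B" "finite C" "finite E" and "X \<noteq> {}"
    and decoupled_C: "\<And>x y c c'. x \<in> X \<Longrightarrow> y \<in> X \<Longrightarrow> c \<in> C \<Longrightarrow> c' \<in> C \<Longrightarrow>
      (\<Sum>b\<in>B. \<Sum>e\<in>E. \<Psi> x b c e * cnj (\<Psi> y b c' e)) = (if x = y then \<tau> c c' else 0)"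
    and decoupled_E: "\<And>x y e e'. x \<in> X \<Longrightarrow> y \<in> X \<Longrightarrow> e \<in> E \<Longrightarrow> e' \<in> E \<Longrightarrow>
      (\<Sum>b\<in>B. \<Sum>c\<in>C. \<Psi> x b c e * cnj (\<Psi> y b c e')) = (if x = y then \<omega> e e' else 0)"
    and "(\<Sum>e\<in>E. \<omega> e e) \<noteq> 0"
  shows "card X \<le> card B"
proof -
  define N where "N = real (card X)"
  define W where "W = hs_norm_sq E \<omega>"
  define T where "T = hs_norm_sq C \<tau>"
  obtain x0 where "x0 \<in> X" using \<open>X \<noteq> {}\<close> by blast
  have NW: "N * W \<le> real (card B) * T"
    unfolding N_def W_def T_def
    by (rule card_mult_hs_norm_sq_le[OF \<open>finite X\<close> \<open>finite B\<close>, where \<Psi> = \<Psi>])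
      (use decoupled_C decoupled_E in auto)
  have NT: "N * T \<le> real (card B) * W"
    unfolding N_def W_def T_def
    by (rule card_mult_hs_norm_sq_le[OF \<open>finite X\<close> \<open>finite B\<close>, where \<Psi> = "\<lambda>x b e c. \<Psi> x b c e"])
      (use decoupled_C decoupled_E in auto)
  have "0 < W"
    unfolding W_def by (rule hs_norm_sq_pos) fact+
  have "(\<Sum>c\<in>C. \<tau> c c) = (\<Sum>e\<in>E. \<omega> e e)"
  proof -
    have "(\<Sum>c\<in>C. \<tau> c c) = (\<Sum>c\<in>C. \<Sum>b\<in>B. \<Sum>e\<in>E. \<Psi> x0 b c e * cnj (\<Psi> x0 b c e))"
      using decoupled_C[OF \<open>x0 \<in> X\<close> \<open>x0 \<in> X\<close>] by simp
    also have "\<dots> = (\<Sum>b\<in>B. \<Sum>e\<in>E. \<Sum>c\<in>C. \<Psi> x0 b c e * cnj (\<Psi> x0 b c e))"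
      by (subst sum.swap) (rule sum.cong[OF refl], rule sum.swap)
    also have "\<dots> = (\<Sum>e\<in>E. \<Sum>b\<in>B. \<Sum>c\<in>C. \<Psi> x0 b c e * cnj (\<Psi> x0 b c e))"
      by (rule sum.swap)
    also have "\<dots> = (\<Sum>e\<in>E. \<omega> e e)"
      using decoupled_E[OF \<open>x0 \<in> X\<close> \<open>x0 \<in> X\<close>] by simp
    finally show ?thesis .
  qed
  then have "0 < T"
    unfolding T_def using assms(3,8) by (intro hs_norm_sq_pos) simp_all
  have "N * W * (N * T) \<le> real (card B) * T * (real (card B) * W)"
    by (rule mult_mono[OF NW NT]) (use \<open>0 < T\<close> \<open>0 < W\<close> in \<open>simp_all add: N_def\<close>)
  then have "N\<^sup>2 * (T * W) \<le> (real (card B))\<^sup>2 * (T * W)"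
    by (simp add: power2_eq_square mult_ac)
  with \<open>0 < T\<close> \<open>0 < W\<close> have "N\<^sup>2 \<le> (real (card B))\<^sup>2"
    by simp
  then show ?thesis
    unfolding N_def by (simp add: power2_le_iff_abs_le)
qed

definition unit_vector :: "'a set \<Rightarrow> ('a \<Rightarrow> complex) \<Rightarrow> bool" where
  "unit_vector X \<phi> \<longleftrightarrow> (\<Sum>a\<in>X. \<phi> a * cnj (\<phi> a)) = 1"

definition pure_state :: "('a \<Rightarrow> complex) \<Rightarrow> 'a \<Rightarrow> 'a \<Rightarrow> complex" where
  "pure_state \<phi> = (\<lambda>a b. \<phi> a * cnj (\<phi> b))"

definition basis_vector :: "'a \<Rightarrow> 'a \<Rightarrow> complex" where
  "basis_vector x = (\<lambda>a. if a = x then 1 else 0)"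

lemma is_density_pure_state:
  assumes "unit_vector (qbasis q R) \<phi>"
  shows "is_density q R (pure_state \<phi>)"
proof -
  have "Im Q = 0 \<and> Re Q \<ge> 0"
    if "Q = (\<Sum>x\<in>qbasis q R. \<Sum>y\<in>qbasis q R. cnj (v x) * pure_state \<phi> x y * v y)" for v Q
  proof -
    define z where "z = (\<Sum>x\<in>qbasis q R. cnj (v x) * \<phi> x)"
    have "Q = z * cnj z"
      unfolding that z_def pure_state_def
      by (simp add: sum_distrib_left sum_distrib_right cnj_sum mult_ac) (rule sum.swap)
    also have "\<dots> = complex_of_real ((cmod z)\<^sup>2)"
      by (rule complex_norm_square[symmetric])
    finally show ?thesis by simp
  qed
  then show ?thesis
    using assms unfolding is_density_def unit_vector_def pure_state_def Let_def by simp
qed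

lemma cnj_basis_vector [simp]: "cnj (basis_vector x a) = basis_vector x a"
  by (simp add: basis_vector_def)

lemma sum_mult_basis_vector:
  "finite X \<Longrightarrow> x \<in> X \<Longrightarrow> (\<Sum>a\<in>X. f a * basis_vector x a) = f x"
  by (simp add: basis_vector_def if_distrib cong: if_cong)

lemma sum_mult_two_point_vector:
  assumes "finite X" "x \<in> X" "y \<in> X"
  shows "(\<Sum>a\<in>X. f a * (\<alpha> * (basis_vector x a + \<theta> * basis_vector y a))) = \<alpha> * (f x + \<theta> * f y)"
proof -
  have "(\<Sum>a\<in>X. f a * (\<alpha> * (basis_vector x a + \<theta> * basis_vector y a)))
      = \<alpha> * ((\<Sum>a\<in>X. f a * basis_vector x a) + \<theta> * (\<Sum>a\<in>X. f a * basis_vector y a))"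
    by (simp add: distrib_left sum.distrib sum_distrib_left mult_ac)
  then show ?thesis
    using assms by (simp add: sum_mult_basis_vector)
qed

lemma unit_vector_basis_vector: "finite X \<Longrightarrow> x \<in> X \<Longrightarrow> unit_vector X (basis_vector x)"
  unfolding unit_vector_def by (simp add: sum_mult_basis_vector) (simp add: basis_vector_def)

lemma unit_vector_two_point_vector:
  assumes "finite X" "x \<in> X" "y \<in> X" "x \<noteq> y" and "\<alpha> * cnj \<alpha> * (1 + \<theta> * cnj \<theta>) = 1"
  shows "unit_vector X (\<lambda>a. \<alpha> * (basis_vector x a + \<theta> * basis_vector y a))"
proof -
  have "(\<Sum>a\<in>X. \<alpha> * (basis_vector x a + \<theta> * basis_vector y a)
        * cnj (\<alpha> * (basis_vector x a + \<theta> * basis_vector y a)))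
      = (\<Sum>a\<in>X. (cnj \<alpha> * (basis_vector x a + cnj \<theta> * basis_vector y a))
        * (\<alpha> * (basis_vector x a + \<theta> * basis_vector y a)))"
    by (simp add: mult.commute)
  also have "\<dots> = \<alpha> * (cnj \<alpha> + \<theta> * (cnj \<alpha> * cnj \<theta>))"
    using assms by (simp only: sum_mult_two_point_vector) (simp add: basis_vector_def)
  finally show ?thesis
    unfolding unit_vector_def using assms(5) by (simp add: algebra_simps)
qed

lemma pure_state_form_two_point_vector:
  assumes "finite X" "x \<in> X" "y \<in> X"
  shows "(\<Sum>a\<in>X. \<Sum>b\<in>X. G a b * pure_state (\<lambda>a. \<alpha> * (basis_vector x a + \<theta> * basis_vector y a)) a b)
    = \<alpha> * cnj \<alpha> * (G x x + cnj \<theta> * G x y + \<theta> * G y x + \<theta> * cnj \<theta> * G y y)"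
proof -
  define \<phi> where "\<phi> a = \<alpha> * (basis_vector x a + \<theta> * basis_vector y a)" for a
  have "(\<Sum>a\<in>X. \<Sum>b\<in>X. G a b * pure_state \<phi> a b)
      = (\<Sum>a\<in>X. (\<Sum>b\<in>X. G a b * (cnj \<alpha> * (basis_vector x b + cnj \<theta> * basis_vector y b))) * \<phi> a)"
    by (simp add: pure_state_def \<phi>_def sum_distrib_left sum_distrib_right mult_ac)
  also have "\<dots> = (\<Sum>a\<in>X. (cnj \<alpha> * (G a x + cnj \<theta> * G a y)) * \<phi> a)"
    using assms by (simp only: sum_mult_two_point_vector)
  also have "\<dots> = \<alpha> * (cnj \<alpha> * (G x x + cnj \<theta> * G x y) + \<theta> * (cnj \<alpha> * (G y x + cnj \<theta> * G y y)))"
    unfolding \<phi>_def using assms by (simp only: sum_mult_two_point_vector)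
  finally show ?thesis
    unfolding \<phi>_def by (simp add: algebra_simps)
qed

definition inv_sqrt2 :: complex where
  "inv_sqrt2 = complex_of_real (sqrt (1 / 2))"

lemma inv_sqrt2_mult_cnj: "inv_sqrt2 * cnj inv_sqrt2 = 1 / 2"
proof -
  have "inv_sqrt2 * cnj inv_sqrt2 = complex_of_real (sqrt (1 / 2) * sqrt (1 / 2))"
    by (simp add: inv_sqrt2_def flip: of_real_mult)
  also have "sqrt (1 / 2) * sqrt (1 / 2) = (1 / 2 :: real)"
    by (simp flip: real_sqrt_mult)
  finally show ?thesis by simp
qed

text \<open>Polarisation: the values of the form on the two-point vectors
  \<open>(|x\<rangle> + |y\<rangle>)/\<surd>2\<close> and \<open>(|x\<rangle> + \<i>|y\<rangle>)/\<surd>2\<close> determine \<open>G x y\<close>.\<close>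
lemma form_constant_on_pure_states_imp_scalar:
  fixes G :: "'a \<Rightarrow> 'a \<Rightarrow> complex"
  assumes "finite X"
    and const: "\<And>\<phi>. unit_vector X \<phi> \<Longrightarrow> (\<Sum>a\<in>X. \<Sum>b\<in>X. G a b * pure_state \<phi> a b) = \<kappa>"
    and "x \<in> X" "y \<in> X"
  shows "G x y = (if x = y then \<kappa> else 0)"
proof -
  have diagonal: "G z z = \<kappa>" if "z \<in> X" for z
    using const[OF unit_vector_basis_vector[OF \<open>finite X\<close> that]] \<open>finite X\<close> that
    by (simp add: pure_state_def sum_mult_basis_vector
        flip: sum_distrib_right mult.assoc)
  show ?thesis
  proof (cases "x = y")
    case True
    with diagonal \<open>x \<in> X\<close> show ?thesis by simp
  next
    case False
    have two_point: "(G x x + cnj \<theta> * G x y + \<theta> * G y x + G y y) / 2 = \<kappa>"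
      if "\<theta> * cnj \<theta> = 1" for \<theta>
    proof -
      have "unit_vector X (\<lambda>a. inv_sqrt2 * (basis_vector x a + \<theta> * basis_vector y a))"
        using assms False that
        by (intro unit_vector_two_point_vector) (simp_all add: inv_sqrt2_mult_cnj)
      from const[OF this] show ?thesis
        using that
        by (simp add: pure_state_form_two_point_vector[OF assms(1,3,4)] inv_sqrt2_mult_cnj)
    qed
    have "G x y + G y x = 0"
      using two_point[of 1] diagonal \<open>x \<in> X\<close> \<open>y \<in> X\<close> by (simp add: field_simps)
    moreover have "- \<i> * G x y + \<i> * G y x = 0"
      using two_point[of \<i>] diagonal \<open>x \<in> X\<close> \<open>y \<in> X\<close> by (simp add: field_simps)
    ultimately have "G x y = 0"
      by (simp add: algebra_simps)
    with False show ?thesis by simp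
  qed
qed

lemma sum_mult_cnj_eq_0_imp_eq_0:
  fixes z :: "'j \<Rightarrow> complex"
  assumes "finite J" and "(\<Sum>j\<in>J. z j * cnj (z j)) = 0" and "j \<in> J"
  shows "z j = 0"
proof -
  have "complex_of_real (\<Sum>j\<in>J. (cmod (z j))\<^sup>2) = 0"
    using assms(2) by (simp only: of_real_sum complex_norm_square)
  then have "(\<Sum>j\<in>J. (cmod (z j))\<^sup>2) = 0"
    by (simp only: of_real_eq_0_iff)
  with assms(1,3) show ?thesis
    by (simp add: sum_nonneg_eq_0_iff)
qed

locale identity_kraus =
  fixes X :: "'x set" and J :: "'j set" and M :: "'j \<Rightarrow> 'x \<Rightarrow> 'x \<Rightarrow> complex"
  assumes finite_X: "finite X" and finite_J: "finite J"
    and identity: "\<And>\<phi> u u'. unit_vector X \<phi> \<Longrightarrow> u \<in> X \<Longrightarrow> u' \<in> X \<Longrightarrow>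
      (\<Sum>j\<in>J. (\<Sum>a\<in>X. M j u a * \<phi> a) * cnj (\<Sum>b\<in>X. M j u' b * \<phi> b)) = pure_state \<phi> u u'"
begin

lemma identity_basis_vector:
  assumes "x \<in> X" "u \<in> X"
  shows "(\<Sum>j\<in>J. M j u x * cnj (M j u x)) = (if u = x then 1 else 0)"
  using identity[OF unit_vector_basis_vector[OF finite_X \<open>x \<in> X\<close>] \<open>u \<in> X\<close> \<open>u \<in> X\<close>] assms
  by (simp add: sum_mult_basis_vector finite_X pure_state_def) (simp add: basis_vector_def)

lemma off_diagonal_eq_0:
  assumes "j \<in> J" "u \<in> X" "x \<in> X" "u \<noteq> x"
  shows "M j u x = 0"
  using identity_basis_vector[OF \<open>x \<in> X\<close> \<open>u \<in> X\<close>] assms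
  by (intro sum_mult_cnj_eq_0_imp_eq_0[OF finite_J, where z = "\<lambda>j. M j u x"]) simp_all

lemma diagonal_const:
  assumes "j \<in> J" "x \<in> X" "y \<in> X"
  shows "M j x x = M j y y"
proof (cases "x = y")
  case False
  let ?\<phi> = "\<lambda>a. inv_sqrt2 * (basis_vector x a + 1 * basis_vector y a)"
  have "unit_vector X ?\<phi>"
    using assms False
    by (intro unit_vector_two_point_vector finite_X) (simp_all add: inv_sqrt2_mult_cnj)
  moreover have "(\<Sum>a\<in>X. M i x a * ?\<phi> a) = inv_sqrt2 * M i x x"
    and "(\<Sum>a\<in>X. M i y a * ?\<phi> a) = inv_sqrt2 * M i y y" if "i \<in> J" for i
    using sum_mult_two_point_vector[OF finite_X \<open>x \<in> X\<close> \<open>y \<in> X\<close>, of "M i x" inv_sqrt2 1]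
      sum_mult_two_point_vector[OF finite_X \<open>x \<in> X\<close> \<open>y \<in> X\<close>, of "M i y" inv_sqrt2 1]
      off_diagonal_eq_0[OF that \<open>x \<in> X\<close> \<open>y \<in> X\<close> False]
      off_diagonal_eq_0[OF that \<open>y \<in> X\<close> \<open>x \<in> X\<close>] False
    by simp_all
  moreover have "pure_state ?\<phi> x y = inv_sqrt2 * cnj inv_sqrt2"
    using False by (simp add: pure_state_def basis_vector_def)
  ultimately have "(\<Sum>j\<in>J. (inv_sqrt2 * M j x x) * cnj (inv_sqrt2 * M j y y))
      = inv_sqrt2 * cnj inv_sqrt2"
    using identity[of ?\<phi> x y] \<open>x \<in> X\<close> \<open>y \<in> X\<close> by simp
  moreover have "(\<Sum>j\<in>J. (inv_sqrt2 * M j x x) * cnj (inv_sqrt2 * M j y y))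
      = inv_sqrt2 * cnj inv_sqrt2 * (\<Sum>j\<in>J. M j x x * cnj (M j y y))"
    by (simp add: sum_distrib_left mult_ac)
  ultimately have xy: "(\<Sum>j\<in>J. M j x x * cnj (M j y y)) = 1"
    by (simp add: inv_sqrt2_mult_cnj)
  then have yx: "(\<Sum>j\<in>J. M j y y * cnj (M j x x)) = 1"
    by (metis (no_types, lifting) cnj_sum complex_cnj_cnj complex_cnj_mult complex_cnj_one
        mult.commute sum.cong)
  have "(\<Sum>j\<in>J. (M j x x - M j y y) * cnj (M j x x - M j y y))
      = (\<Sum>j\<in>J. M j x x * cnj (M j x x)) - (\<Sum>j\<in>J. M j x x * cnj (M j y y))
        - (\<Sum>j\<in>J. M j y y * cnj (M j x x)) + (\<Sum>j\<in>J. M j y y * cnj (M j y y))"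
    by (simp add: algebra_simps sum.distrib sum_subtractf)
  also have "\<dots> = 0"
    using xy yx identity_basis_vector[OF \<open>x \<in> X\<close> \<open>x \<in> X\<close>] identity_basis_vector[OF \<open>y \<in> X\<close> \<open>y \<in> X\<close>]
    by simp
  finally have "M j x x - M j y y = 0"
    by (rule sum_mult_cnj_eq_0_imp_eq_0[OF finite_J _ \<open>j \<in> J\<close>])
  then show ?thesis by simp
qed simp

lemma kraus_eq_scalar:
  assumes "x0 \<in> X" "j \<in> J" "u \<in> X" "x \<in> X"
  shows "M j u x = (if u = x then M j x0 x0 else 0)"
  using assms diagonal_const[of j x x0] off_diagonal_eq_0[of j u x] by auto

lemma scalar_norm:
  assumes "x0 \<in> X"
  shows "(\<Sum>j\<in>J. M j x0 x0 * cnj (M j x0 x0)) = 1"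
  using identity_basis_vector[OF assms assms] by simp

end

lemma knill_laflamme_of_scalar_recovery:
  fixes R :: "'k \<Rightarrow> 'x \<Rightarrow> 't \<Rightarrow> complex" and A :: "'e \<Rightarrow> 't \<Rightarrow> 'x \<Rightarrow> complex"
  assumes "finite X" "finite T"
    and channel: "\<And>t t'. t \<in> T \<Longrightarrow> t' \<in> T \<Longrightarrow>
      (\<Sum>k\<in>K. \<Sum>u\<in>X. cnj (R k u t) * R k u t') = (if t = t' then 1 else 0)"
    and scalar: "\<And>k e u x. k \<in> K \<Longrightarrow> e \<in> E \<Longrightarrow> u \<in> X \<Longrightarrow> x \<in> X \<Longrightarrow>
      (\<Sum>t\<in>T. R k u t * A e t x) = (if u = x then c k e else 0)"
    and "x \<in> X" "y \<in> X" "e \<in> E" "e' \<in> E"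
  shows "(\<Sum>t\<in>T. A e t x * cnj (A e' t y)) = (if x = y then \<Sum>k\<in>K. c k e * cnj (c k e') else 0)"
proof -
  have "(\<Sum>t\<in>T. A e t x * cnj (A e' t y))
      = (\<Sum>t\<in>T. \<Sum>t'\<in>T. A e t x * cnj (A e' t' y) * cnj (\<Sum>k\<in>K. \<Sum>u\<in>X. cnj (R k u t) * R k u t'))"
    using \<open>finite T\<close> by (simp add: channel if_distrib cong: if_cong)
  also have "\<dots> = (\<Sum>t\<in>T. \<Sum>t'\<in>T. \<Sum>k\<in>K. \<Sum>u\<in>X. (R k u t * A e t x) * cnj (R k u t' * A e' t' y))"
    by (simp add: cnj_sum sum_distrib_left mult_ac)
  also have "\<dots> = (\<Sum>k\<in>K. \<Sum>u\<in>X. \<Sum>t\<in>T. \<Sum>t'\<in>T. (R k u t * A e t x) * cnj (R k u t' * A e' t' y))"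
    by (rule sum_swap_inner_pairs)
  also have "\<dots> = (\<Sum>k\<in>K. \<Sum>u\<in>X. (\<Sum>t\<in>T. R k u t * A e t x) * cnj (\<Sum>t\<in>T. R k u t * A e' t y))"
    by (simp add: cnj_sum sum_product)
  also have "\<dots> = (\<Sum>k\<in>K. \<Sum>u\<in>X. (if u = x then c k e else 0) * cnj (if u = y then c k e' else 0))"
    using assms by (intro sum.cong refl) (simp add: scalar)
  also have "\<dots> = (\<Sum>k\<in>K. \<Sum>u\<in>X. if u = x then (if x = y then c k e * cnj (c k e') else 0) else 0)"
    by (intro sum.cong refl) auto
  also have "\<dots> = (if x = y then \<Sum>k\<in>K. c k e * cnj (c k e') else 0)"
    using \<open>finite X\<close> \<open>x \<in> X\<close> by (cases "x = y") simp_all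
  finally show ?thesis .
qed

lemma finite_qbasis: "finite R \<Longrightarrow> finite (qbasis q R)"
  unfolding qbasis_def by (simp add: finite_PiE)

lemma card_qbasis: "finite R \<Longrightarrow> card (qbasis q R) = q ^ card R"
  unfolding qbasis_def by (simp add: card_PiE)

lemma qbasis_nonempty: "0 < q \<Longrightarrow> qbasis q R \<noteq> {}"
  unfolding qbasis_def by (auto simp: PiE_eq_empty_iff)

lemma merge_basis_in_qbasis:
  "u \<in> qbasis q U \<Longrightarrow> v \<in> qbasis q V \<Longrightarrow> merge_basis U u v \<in> qbasis q (U \<union> V)"
  unfolding qbasis_def merge_basis_def PiE_def Pi_def extensional_def by auto

lemma sum_qbasis_Un:
  assumes "U \<inter> V = {}"
  shows "(\<Sum>w\<in>qbasis q (U \<union> V). h w) = (\<Sum>u\<in>qbasis q U. \<Sum>v\<in>qbasis q V. h (merge_basis U u v))"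
proof -
  have "(\<Sum>u\<in>qbasis q U. \<Sum>v\<in>qbasis q V. h (merge_basis U u v))
      = (\<Sum>p\<in>qbasis q U \<times> qbasis q V. h (merge_basis U (fst p) (snd p)))"
    by (simp add: sum.cartesian_product case_prod_beta)
  also have "\<dots> = (\<Sum>w\<in>qbasis q (U \<union> V). h w)"
  proof (rule sum.reindex_bij_witness[where i = "\<lambda>w. (restrict w U, restrict w V)"
        and j = "\<lambda>p. merge_basis U (fst p) (snd p)"])
    fix w assume w: "w \<in> qbasis q (U \<union> V)"
    then show "(restrict w U, restrict w V) \<in> qbasis q U \<times> qbasis q V"
      unfolding qbasis_def by auto
    show "merge_basis U (fst (restrict w U, restrict w V)) (snd (restrict w U, restrict w V)) = w"
      using w unfolding merge_basis_def qbasis_def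
      by (auto simp: fun_eq_iff PiE_def extensional_def)
  next
    fix p assume p: "p \<in> qbasis q U \<times> qbasis q V"
    then show "merge_basis U (fst p) (snd p) \<in> qbasis q (U \<union> V)"
      by (auto intro: merge_basis_in_qbasis)
    show "(restrict (merge_basis U (fst p) (snd p)) U,
        restrict (merge_basis U (fst p) (snd p)) V) = p"
      using p assms unfolding merge_basis_def qbasis_def
      by (cases p) (auto simp: fun_eq_iff PiE_def extensional_def)
  qed simp
  finally show ?thesis by simp
qed

lemma sum_list_conv_sum_nth: "(\<Sum>K\<leftarrow>Ks. f K) = (\<Sum>i<length Ks. f (Ks ! i))"
  by (simp add: sum_list_sum_nth atLeast0LessThan)

text \<open>Kraus operators of "encode, trace out \<open>L - T\<close>, decode", indexed by a decoder Kraus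
  index, a basis state of \<open>L - T\<close> and an encoder Kraus index.\<close>
definition effective_kraus ::
  "nat \<Rightarrow> 'l set \<Rightarrow> ('l, 's) qop list \<Rightarrow> ('s, 'l) qop list \<Rightarrow> nat \<times> ('l \<Rightarrow> nat) \<times> nat \<Rightarrow>
   ('s \<Rightarrow> nat) \<Rightarrow> ('s \<Rightarrow> nat) \<Rightarrow> complex" where
  "effective_kraus q T D Es j u x =
     (\<Sum>t\<in>qbasis q T. (D ! fst j) u t * (Es ! snd (snd j)) (merge_basis T t (fst (snd j))) x)"

lemma decode_ptrace_encode_pure_state:
  "apply_channel q T S D (ptrace q L T (apply_channel q S L Es (pure_state \<phi>))) u u'
    = (\<Sum>j\<in>{..<length D} \<times> qbasis q (L - T) \<times> {..<length Es}.
        (\<Sum>a\<in>qbasis q S. effective_kraus q T D Es j u a * \<phi> a)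
        * cnj (\<Sum>b\<in>qbasis q S. effective_kraus q T D Es j u' b * \<phi> b))"
proof -
  define K where "K k t w i a = (D ! k) u t * (Es ! i) (merge_basis T t w) a * \<phi> a" for k t w i a
  define K' where "K' k t w i a = (D ! k) u' t * (Es ! i) (merge_basis T t w) a * \<phi> a" for k t w i a
  have "apply_channel q T S D (ptrace q L T (apply_channel q S L Es (pure_state \<phi>))) u u'
      = (\<Sum>k<length D. \<Sum>t\<in>qbasis q T. \<Sum>t'\<in>qbasis q T. \<Sum>w\<in>qbasis q (L - T). \<Sum>i<length Es.
          \<Sum>a\<in>qbasis q S. \<Sum>b\<in>qbasis q S. K k t w i a * cnj (K' k t' w i b))"
    unfolding apply_channel_def ptrace_def sum_list_conv_sum_nth pure_state_def K_def K'_def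
    by (simp add: sum_distrib_left sum_distrib_right mult_ac)
  also have "\<dots> = (\<Sum>k<length D. \<Sum>w\<in>qbasis q (L - T). \<Sum>i<length Es.
          \<Sum>t\<in>qbasis q T. \<Sum>t'\<in>qbasis q T. \<Sum>a\<in>qbasis q S. \<Sum>b\<in>qbasis q S.
            K k t w i a * cnj (K' k t' w i b))"
    by (rule sum.cong[OF refl], rule sum_swap_inner_pairs)
  also have "\<dots> = (\<Sum>k<length D. \<Sum>w\<in>qbasis q (L - T). \<Sum>i<length Es.
          (\<Sum>a\<in>qbasis q S. \<Sum>t\<in>qbasis q T. K k t w i a)
          * cnj (\<Sum>b\<in>qbasis q S. \<Sum>t'\<in>qbasis q T. K' k t' w i b))"
    by (intro sum.cong refl) (subst sum_swap_inner_pairs, simp add: sum_product cnj_sum)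
  finally show ?thesis
    unfolding K_def K'_def effective_kraus_def sum.cartesian_product'
    by (simp add: sum_distrib_right)
qed

lemma recoverable_imp_knill_laflamme:
  fixes q n m :: nat and s :: "nat \<Rightarrow> nat" and Es :: "(nat, nat \<times> nat) qop list"
  defines "L \<equiv> share_reg s (parties n)" and "X \<equiv> qbasis q (secret_reg m)"
  assumes "0 < q" and "recoverable_from q n m s Es T" and "T \<subseteq> L"
  obtains \<omega> where
    "\<And>x y w w' i i'. x \<in> X \<Longrightarrow> y \<in> X \<Longrightarrow> w \<in> qbasis q (L - T) \<Longrightarrow> w' \<in> qbasis q (L - T) \<Longrightarrow>
      i < length Es \<Longrightarrow> i' < length Es \<Longrightarrow>
      (\<Sum>t\<in>qbasis q T. (Es ! i) (merge_basis T t w) x * cnj ((Es ! i') (merge_basis T t w') y))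
        = (if x = y then \<omega> (w, i) (w', i') else 0)"
    and "(\<Sum>e\<in>qbasis q (L - T) \<times> {..<length Es}. \<omega> e e) = 1"
proof -
  define E where "E = qbasis q (L - T) \<times> {..<length Es}"
  obtain D where D_channel: "is_channel q T (secret_reg m) D" and
    D_recovers: "\<And>\<rho>. is_density q (secret_reg m) \<rho> \<Longrightarrow> op_eq q (secret_reg m)
       (apply_channel q T (secret_reg m) D
          (ptrace q L T (apply_channel q (secret_reg m) L Es \<rho>))) \<rho>"
    using assms(4) unfolding recoverable_from_def L_def by blast
  define J where "J = {..<length D} \<times> E"
  define M where "M = effective_kraus q T D Es"
  have "finite L"
    unfolding L_def share_reg_def parties_def by auto
  then have "finite T" "finite X" "finite E" "finite J"
    using \<open>T \<subseteq> L\<close> finite_subset unfolding X_def E_def J_def secret_reg_def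
    by (auto simp: finite_qbasis)
  interpret identity_kraus X J M
  proof
    fix \<phi> u u' assume "unit_vector X \<phi>" "u \<in> X" "u' \<in> X"
    have "is_density q (secret_reg m) (pure_state \<phi>)"
      using \<open>unit_vector X \<phi>\<close> unfolding X_def by (rule is_density_pure_state)
    from D_recovers[OF this] \<open>u \<in> X\<close> \<open>u' \<in> X\<close>
    show "(\<Sum>j\<in>J. (\<Sum>a\<in>X. M j u a * \<phi> a) * cnj (\<Sum>b\<in>X. M j u' b * \<phi> b)) = pure_state \<phi> u u'"
      unfolding op_eq_def decode_ptrace_encode_pure_state by (simp add: X_def J_def E_def M_def)
  qed fact+
  obtain x0 where "x0 \<in> X"
    using qbasis_nonempty[OF \<open>0 < q\<close>] unfolding X_def by blast
  have D_coisometry: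
    "(\<Sum>k<length D. \<Sum>u\<in>X. cnj ((D ! k) u t) * (D ! k) u t') = (if t = t' then 1 else 0)"
    if "t \<in> qbasis q T" "t' \<in> qbasis q T" for t t'
    using D_channel that unfolding is_channel_def sum_list_conv_sum_nth X_def by simp
  define A where "A e t x = (Es ! snd e) (merge_basis T t (fst e)) x" for e t x
  have D_undoes_A: "(\<Sum>t\<in>qbasis q T. (D ! k) u t * A e t x) = (if u = x then M (k, e) x0 x0 else 0)"
    if "k \<in> {..<length D}" "e \<in> E" "u \<in> X" "x \<in> X" for k e u x
    using kraus_eq_scalar[OF \<open>x0 \<in> X\<close>, of "(k, e)" u x] that
    unfolding M_def J_def A_def effective_kraus_def by simp
  define \<omega> where "\<omega> e e' = (\<Sum>k<length D. M (k, e) x0 x0 * cnj (M (k, e') x0 x0))" for e e'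
  show thesis
  proof
    fix x y w w' i i'
    assume "x \<in> X" "y \<in> X" "w \<in> qbasis q (L - T)" "w' \<in> qbasis q (L - T)"
      "i < length Es" "i' < length Es"
    then have "(\<Sum>t\<in>qbasis q T. A (w, i) t x * cnj (A (w', i') t y))
        = (if x = y then \<omega> (w, i) (w', i') else 0)"
      unfolding \<omega>_def using \<open>finite T\<close>
      by (intro knill_laflamme_of_scalar_recovery[OF \<open>finite X\<close> _ D_coisometry D_undoes_A])
        (auto simp: E_def finite_qbasis)
    then show "(\<Sum>t\<in>qbasis q T.
          (Es ! i) (merge_basis T t w) x * cnj ((Es ! i') (merge_basis T t w') y))
        = (if x = y then \<omega> (w, i) (w', i') else 0)"
      unfolding A_def by simp
  next
    have "(\<Sum>e\<in>E. \<omega> e e) = (\<Sum>j\<in>J. M j x0 x0 * cnj (M j x0 x0))"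
      unfolding \<omega>_def J_def sum.cartesian_product' by (rule sum.swap)
    then show "(\<Sum>e\<in>qbasis q (L - T) \<times> {..<length Es}. \<omega> e e) = 1"
      using scalar_norm[OF \<open>x0 \<in> X\<close>] unfolding E_def by simp
  qed
qed

lemma ptrace_apply_channel:
  "ptrace q L Z (apply_channel q S L Es \<rho>) u u'
    = (\<Sum>a\<in>qbasis q S. \<Sum>b\<in>qbasis q S. (\<Sum>w\<in>qbasis q (L - Z). \<Sum>i<length Es.
        (Es ! i) (merge_basis Z u w) a * cnj ((Es ! i) (merge_basis Z u' w) b)) * \<rho> a b)"
proof -
  have "ptrace q L Z (apply_channel q S L Es \<rho>) u u'
      = (\<Sum>w\<in>qbasis q (L - Z). \<Sum>i<length Es. \<Sum>a\<in>qbasis q S. \<Sum>b\<in>qbasis q S.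
          (Es ! i) (merge_basis Z u w) a * \<rho> a b * cnj ((Es ! i) (merge_basis Z u' w) b))"
    unfolding ptrace_def apply_channel_def sum_list_conv_sum_nth ..
  also have "\<dots> = (\<Sum>a\<in>qbasis q S. \<Sum>b\<in>qbasis q S. \<Sum>w\<in>qbasis q (L - Z). \<Sum>i<length Es.
          (Es ! i) (merge_basis Z u w) a * \<rho> a b * cnj ((Es ! i) (merge_basis Z u' w) b))"
    by (rule sum_swap_inner_pairs)
  finally show ?thesis
    by (simp add: sum_distrib_left mult_ac)
qed

lemma unauthorized_imp_decoupled:
  fixes q n m :: nat and s :: "nat \<Rightarrow> nat" and Es :: "(nat, nat \<times> nat) qop list"
    and Z :: "nat set"
  defines "L \<equiv> share_reg s (parties n)" and "X \<equiv> qbasis q (secret_reg m)"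
    and "Z' \<equiv> share_reg s Z"
  assumes "0 < q" and "unauthorized q n m s Es Z"
  obtains \<tau> where
    "\<And>u u' x y. u \<in> qbasis q Z' \<Longrightarrow> u' \<in> qbasis q Z' \<Longrightarrow> x \<in> X \<Longrightarrow> y \<in> X \<Longrightarrow>
      (\<Sum>w\<in>qbasis q (L - Z'). \<Sum>i<length Es.
          (Es ! i) (merge_basis Z' u w) x * cnj ((Es ! i) (merge_basis Z' u' w) y))
        = (if x = y then \<tau> u u' else 0)"
proof -
  define G where "G u u' x y = (\<Sum>w\<in>qbasis q (L - Z'). \<Sum>i<length Es.
      (Es ! i) (merge_basis Z' u w) x * cnj ((Es ! i) (merge_basis Z' u' w) y))" for u u' x y
  have reduced_Z: "ptrace q L Z' (apply_channel q (secret_reg m) L Es \<rho>) u u'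
      = (\<Sum>a\<in>X. \<Sum>b\<in>X. G u u' a b * \<rho> a b)" for \<rho> u u'
    unfolding ptrace_apply_channel G_def X_def ..
  have "finite X"
    unfolding X_def secret_reg_def by (simp add: finite_qbasis)
  obtain x0 where "x0 \<in> X"
    using qbasis_nonempty[OF \<open>0 < q\<close>] unfolding X_def by blast
  have "G u u' x y = (if x = y then G u u' x0 x0 else 0)"
    if "u \<in> qbasis q Z'" "u' \<in> qbasis q Z'" "x \<in> X" "y \<in> X" for u u' x y
  proof -
    have "(\<Sum>a\<in>X. \<Sum>b\<in>X. G u u' a b * pure_state \<phi> a b)
        = (\<Sum>a\<in>X. \<Sum>b\<in>X. G u u' a b * pure_state (basis_vector x0) a b)" if "unit_vector X \<phi>" for \<phi>
    proof -
      have "is_density q (secret_reg m) (pure_state \<phi>)"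
        "is_density q (secret_reg m) (pure_state (basis_vector x0))"
        using that unit_vector_basis_vector[OF \<open>finite X\<close> \<open>x0 \<in> X\<close>]
        unfolding X_def by (simp_all add: is_density_pure_state)
      with assms(5) \<open>u \<in> qbasis q Z'\<close> \<open>u' \<in> qbasis q Z'\<close> show ?thesis
        unfolding unauthorized_def op_eq_def reduced_Z[symmetric] L_def Z'_def by blast
    qed
    from form_constant_on_pure_states_imp_scalar[OF \<open>finite X\<close> this]
    show ?thesis
      using \<open>x \<in> X\<close> \<open>y \<in> X\<close> \<open>x0 \<in> X\<close> by (metis (lifting))
  qed
  then show thesis
    unfolding G_def by (rule that)
qed

lemma merge_basis_regroup:
  "merge_basis Z (merge_basis (T \<inter> Z) c g) (merge_basis (T - Z) b f)
    = merge_basis T (merge_basis (T - Z) b c) (merge_basis (Z - T) g f)"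
  by (auto simp: merge_basis_def fun_eq_iff)

text \<open>An amplitude \<open>\<Phi> x l i\<close> (secret basis state \<open>x\<close>, basis state \<open>l\<close> of the register \<open>L\<close>,
  Kraus index \<open>i\<close>) with its register split into \<open>T - Z\<close>, \<open>T \<inter> Z\<close>, \<open>Z - T\<close> and the rest;
  the last two parts are paired with \<open>T \<inter> Z\<close> and with the Kraus index, respectively.\<close>
definition regroup ::
  "'l set \<Rightarrow> 'l set \<Rightarrow> ('x \<Rightarrow> ('l \<Rightarrow> nat) \<Rightarrow> 'i \<Rightarrow> complex) \<Rightarrow>
   'x \<Rightarrow> ('l \<Rightarrow> nat) \<Rightarrow> ('l \<Rightarrow> nat) \<times> ('l \<Rightarrow> nat) \<Rightarrow> ('l \<Rightarrow> nat) \<times> 'i \<Rightarrow> complex" where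
  "regroup T Z \<Phi> x b cg fi =
     \<Phi> x (merge_basis T (merge_basis (T - Z) b (fst cg)) (merge_basis (Z - T) (snd cg) (fst fi)))
       (snd fi)"

lemma regroup_decoupled_from_unauthorized:
  assumes "T \<subseteq> L"
    and secrecy: "\<And>u u' x y. u \<in> qbasis q Z \<Longrightarrow> u' \<in> qbasis q Z \<Longrightarrow> x \<in> X \<Longrightarrow> y \<in> X \<Longrightarrow>
      (\<Sum>w\<in>qbasis q (L - Z). \<Sum>i\<in>I. \<Phi> x (merge_basis Z u w) i * cnj (\<Phi> y (merge_basis Z u' w) i))
        = (if x = y then \<tau> u u' else 0)"
    and "x \<in> X" "y \<in> X"
    and "cg \<in> qbasis q (T \<inter> Z) \<times> qbasis q (Z - T)" "cg' \<in> qbasis q (T \<inter> Z) \<times> qbasis q (Z - T)"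
  shows "(\<Sum>b\<in>qbasis q (T - Z). \<Sum>fi\<in>qbasis q (L - T - Z) \<times> I.
      regroup T Z \<Phi> x b cg fi * cnj (regroup T Z \<Phi> y b cg' fi))
    = (if x = y then \<tau> (merge_basis (T \<inter> Z) (fst cg) (snd cg)) (merge_basis (T \<inter> Z) (fst cg') (snd cg'))
       else 0)"
proof -
  obtain c g c' g' where cg: "cg = (c, g)" "cg' = (c', g')"
    and "c \<in> qbasis q (T \<inter> Z)" "g \<in> qbasis q (Z - T)"
    and "c' \<in> qbasis q (T \<inter> Z)" "g' \<in> qbasis q (Z - T)"
    using assms(5,6) by (cases cg, cases cg') auto
  moreover have "T \<inter> Z \<union> (Z - T) = Z"
    by auto
  ultimately have in_Z:
    "merge_basis (T \<inter> Z) c g \<in> qbasis q Z" "merge_basis (T \<inter> Z) c' g' \<in> qbasis q Z"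
    using merge_basis_in_qbasis by metis+
  have "L - Z = (T - Z) \<union> (L - T - Z)" "(T - Z) \<inter> (L - T - Z) = {}"
    using \<open>T \<subseteq> L\<close> by auto
  then have split: "(\<Sum>w\<in>qbasis q (L - Z). h w)
      = (\<Sum>b\<in>qbasis q (T - Z). \<Sum>f\<in>qbasis q (L - T - Z). h (merge_basis (T - Z) b f))" for h
    by (simp only: sum_qbasis_Un)
  have "(\<Sum>b\<in>qbasis q (T - Z). \<Sum>fi\<in>qbasis q (L - T - Z) \<times> I.
      regroup T Z \<Phi> x b cg fi * cnj (regroup T Z \<Phi> y b cg' fi))
    = (\<Sum>w\<in>qbasis q (L - Z). \<Sum>i\<in>I. \<Phi> x (merge_basis Z (merge_basis (T \<inter> Z) c g) w) i
        * cnj (\<Phi> y (merge_basis Z (merge_basis (T \<inter> Z) c' g') w) i))"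
    by (simp add: split sum.cartesian_product' regroup_def cg merge_basis_regroup)
  also have "\<dots> = (if x = y then \<tau> (merge_basis (T \<inter> Z) c g) (merge_basis (T \<inter> Z) c' g') else 0)"
    by (rule secrecy[OF in_Z \<open>x \<in> X\<close> \<open>y \<in> X\<close>])
  finally show ?thesis
    unfolding cg by simp
qed

lemma regroup_decoupled_from_recoverable:
  assumes "Z \<subseteq> L"
    and recovery: "\<And>x y w w' i i'. x \<in> X \<Longrightarrow> y \<in> X \<Longrightarrow> w \<in> qbasis q (L - T) \<Longrightarrow> w' \<in> qbasis q (L - T) \<Longrightarrow>
      i \<in> I \<Longrightarrow> i' \<in> I \<Longrightarrow>
      (\<Sum>t\<in>qbasis q T. \<Phi> x (merge_basis T t w) i * cnj (\<Phi> y (merge_basis T t w') i'))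
        = (if x = y then \<omega> (w, i) (w', i') else 0)"
    and "x \<in> X" "y \<in> X"
    and "fi \<in> qbasis q (L - T - Z) \<times> I" "fi' \<in> qbasis q (L - T - Z) \<times> I"
  shows "(\<Sum>b\<in>qbasis q (T - Z). \<Sum>cg\<in>qbasis q (T \<inter> Z) \<times> qbasis q (Z - T).
      regroup T Z \<Phi> x b cg fi * cnj (regroup T Z \<Phi> y b cg fi'))
    = (if x = y then \<Sum>g\<in>qbasis q (Z - T).
         \<omega> (merge_basis (Z - T) g (fst fi), snd fi) (merge_basis (Z - T) g (fst fi'), snd fi')
       else 0)"
proof -
  obtain f i f' i' where fi: "fi = (f, i)" "fi' = (f', i')"
    and "f \<in> qbasis q (L - T - Z)" "f' \<in> qbasis q (L - T - Z)" "i \<in> I" "i' \<in> I"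
    using assms(5,6) by (cases fi, cases fi') auto
  have "(T - Z) \<inter> (T \<inter> Z) = {}"
    by auto
  then have split: "(\<Sum>t\<in>qbasis q T. h t)
      = (\<Sum>b\<in>qbasis q (T - Z). \<Sum>c\<in>qbasis q (T \<inter> Z). h (merge_basis (T - Z) b c))" for h
    using sum_qbasis_Un[of "T - Z" "T \<inter> Z" h q] by (simp add: Un_Diff_Int)
  have "(\<Sum>b\<in>qbasis q (T - Z). \<Sum>cg\<in>qbasis q (T \<inter> Z) \<times> qbasis q (Z - T).
      regroup T Z \<Phi> x b cg fi * cnj (regroup T Z \<Phi> y b cg fi'))
    = (\<Sum>b\<in>qbasis q (T - Z). \<Sum>c\<in>qbasis q (T \<inter> Z). \<Sum>g\<in>qbasis q (Z - T).
        \<Phi> x (merge_basis T (merge_basis (T - Z) b c) (merge_basis (Z - T) g f)) i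
        * cnj (\<Phi> y (merge_basis T (merge_basis (T - Z) b c) (merge_basis (Z - T) g f')) i'))"
    by (simp add: sum.cartesian_product' regroup_def fi)
  also have "\<dots> = (\<Sum>g\<in>qbasis q (Z - T). \<Sum>b\<in>qbasis q (T - Z). \<Sum>c\<in>qbasis q (T \<inter> Z).
        \<Phi> x (merge_basis T (merge_basis (T - Z) b c) (merge_basis (Z - T) g f)) i
        * cnj (\<Phi> y (merge_basis T (merge_basis (T - Z) b c) (merge_basis (Z - T) g f')) i'))"
    by (subst sum.swap) (rule sum.cong[OF refl], rule sum.swap)
  also have "\<dots> = (\<Sum>g\<in>qbasis q (Z - T). \<Sum>t\<in>qbasis q T.
        \<Phi> x (merge_basis T t (merge_basis (Z - T) g f)) i
        * cnj (\<Phi> y (merge_basis T t (merge_basis (Z - T) g f')) i'))"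
    by (simp only: split)
  also have "\<dots> = (\<Sum>g\<in>qbasis q (Z - T).
      if x = y then \<omega> (merge_basis (Z - T) g f, i) (merge_basis (Z - T) g f', i') else 0)"
  proof (rule sum.cong[OF refl])
    fix g assume "g \<in> qbasis q (Z - T)"
    moreover have "(Z - T) \<union> (L - T - Z) = L - T"
      using \<open>Z \<subseteq> L\<close> by auto
    ultimately have "merge_basis (Z - T) g f \<in> qbasis q (L - T)"
      "merge_basis (Z - T) g f' \<in> qbasis q (L - T)"
      using merge_basis_in_qbasis \<open>f \<in> _\<close> \<open>f' \<in> _\<close> by metis+
    then show "(\<Sum>t\<in>qbasis q T. \<Phi> x (merge_basis T t (merge_basis (Z - T) g f)) i
        * cnj (\<Phi> y (merge_basis T t (merge_basis (Z - T) g f')) i'))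
      = (if x = y then \<omega> (merge_basis (Z - T) g f, i) (merge_basis (Z - T) g f', i') else 0)"
      using recovery \<open>x \<in> X\<close> \<open>y \<in> X\<close> \<open>i \<in> I\<close> \<open>i' \<in> I\<close> by blast
  qed
  finally show ?thesis
    unfolding fi by simp
qed

lemma card_le_of_recoverable_and_unauthorized:
  fixes \<Phi> :: "'x \<Rightarrow> ('l \<Rightarrow> nat) \<Rightarrow> 'i \<Rightarrow> complex"
  assumes "finite L" "T \<subseteq> L" "Z \<subseteq> L" "finite X" "X \<noteq> {}" "finite I"
    and recovery: "\<And>x y w w' i i'. x \<in> X \<Longrightarrow> y \<in> X \<Longrightarrow> w \<in> qbasis q (L - T) \<Longrightarrow> w' \<in> qbasis q (L - T) \<Longrightarrow>
      i \<in> I \<Longrightarrow> i' \<in> I \<Longrightarrow>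
      (\<Sum>t\<in>qbasis q T. \<Phi> x (merge_basis T t w) i * cnj (\<Phi> y (merge_basis T t w') i'))
        = (if x = y then \<omega> (w, i) (w', i') else 0)"
    and "(\<Sum>e\<in>qbasis q (L - T) \<times> I. \<omega> e e) \<noteq> 0"
    and secrecy: "\<And>u u' x y. u \<in> qbasis q Z \<Longrightarrow> u' \<in> qbasis q Z \<Longrightarrow> x \<in> X \<Longrightarrow> y \<in> X \<Longrightarrow>
      (\<Sum>w\<in>qbasis q (L - Z). \<Sum>i\<in>I. \<Phi> x (merge_basis Z u w) i * cnj (\<Phi> y (merge_basis Z u' w) i))
        = (if x = y then \<tau> u u' else 0)"
  shows "card X \<le> q ^ card (T - Z)"
proof -
  define G where "G = Z - T"
  define F where "F = L - T - Z"
  define \<omega>' where "\<omega>' fi fi' = (\<Sum>g\<in>qbasis q G.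
      \<omega> (merge_basis G g (fst fi), snd fi) (merge_basis G g (fst fi'), snd fi'))" for fi fi'
  have "finite T" "finite Z"
    using assms(1-3) finite_subset by blast+
  have "G \<union> F = L - T" "G \<inter> F = {}"
    unfolding G_def F_def using \<open>Z \<subseteq> L\<close> by auto
  then have split:
    "(\<Sum>w\<in>qbasis q (L - T). h w) = (\<Sum>g\<in>qbasis q G. \<Sum>f\<in>qbasis q F. h (merge_basis G g f))" for h
    by (simp only: sum_qbasis_Un[symmetric])
  have "(\<Sum>fi\<in>qbasis q F \<times> I. \<omega>' fi fi) = (\<Sum>f\<in>qbasis q F. \<Sum>i\<in>I. \<Sum>g\<in>qbasis q G.
      \<omega> (merge_basis G g f, i) (merge_basis G g f, i))"
    by (simp add: \<omega>'_def sum.cartesian_product')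
  also have "\<dots> = (\<Sum>f\<in>qbasis q F. \<Sum>g\<in>qbasis q G. \<Sum>i\<in>I.
      \<omega> (merge_basis G g f, i) (merge_basis G g f, i))"
    by (rule sum.cong[OF refl], rule sum.swap)
  also have "\<dots> = (\<Sum>e\<in>qbasis q (L - T) \<times> I. \<omega> e e)"
    by (simp add: split sum.cartesian_product' sum.swap[of _ "qbasis q F"])
  finally have trace: "(\<Sum>fi\<in>qbasis q F \<times> I. \<omega>' fi fi) \<noteq> 0"
    using assms(8) by simp
  have "card X \<le> card (qbasis q (T - Z))"
  proof (rule card_le_of_decoupled[where \<Psi> = "regroup T Z \<Phi>" and E = "qbasis q F \<times> I" and \<omega> = \<omega>'])
    show "(\<Sum>b\<in>qbasis q (T - Z). \<Sum>fi\<in>qbasis q F \<times> I.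
        regroup T Z \<Phi> x b cg fi * cnj (regroup T Z \<Phi> y b cg' fi))
      = (if x = y then \<tau> (merge_basis (T \<inter> Z) (fst cg) (snd cg))
          (merge_basis (T \<inter> Z) (fst cg') (snd cg')) else 0)"
      if "x \<in> X" "y \<in> X" "cg \<in> qbasis q (T \<inter> Z) \<times> qbasis q (Z - T)"
        "cg' \<in> qbasis q (T \<inter> Z) \<times> qbasis q (Z - T)" for x y cg cg'
      unfolding F_def by (rule regroup_decoupled_from_unauthorized[OF assms(2) secrecy that])
    show "(\<Sum>b\<in>qbasis q (T - Z). \<Sum>cg\<in>qbasis q (T \<inter> Z) \<times> qbasis q (Z - T).
        regroup T Z \<Phi> x b cg fi * cnj (regroup T Z \<Phi> y b cg fi'))
      = (if x = y then \<omega>' fi fi' else 0)"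
      if "x \<in> X" "y \<in> X" "fi \<in> qbasis q F \<times> I" "fi' \<in> qbasis q F \<times> I" for x y fi fi'
      unfolding \<omega>'_def G_def using that unfolding F_def
      by (intro regroup_decoupled_from_recoverable[OF assms(3), where X = X and I = I])
        (simp_all add: recovery)
  qed (use assms(4-6) trace \<open>finite T\<close> \<open>finite Z\<close> \<open>finite L\<close> in \<open>auto simp: finite_qbasis F_def\<close>)
  then show ?thesis
    using \<open>finite T\<close> by (simp add: card_qbasis)
qed

theorem secret_size_le_card_diff_unauthorized:
  fixes Es :: "(nat, nat \<times> nat) qop list"
  assumes "2 \<le> q" and "recoverable_from q n m s Es T" and "unauthorized q n m s Es Z"
    and "T \<subseteq> share_reg s (parties n)" and "Z \<subseteq> parties n"
  shows "m \<le> card (T - share_reg s Z)"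
proof -
  have "0 < q" using \<open>2 \<le> q\<close> by simp
  obtain \<omega> where
    recovery: "\<And>x y w w' i i'. x \<in> qbasis q (secret_reg m) \<Longrightarrow> y \<in> qbasis q (secret_reg m) \<Longrightarrow>
      w \<in> qbasis q (share_reg s (parties n) - T) \<Longrightarrow> w' \<in> qbasis q (share_reg s (parties n) - T) \<Longrightarrow>
      i < length Es \<Longrightarrow> i' < length Es \<Longrightarrow>
      (\<Sum>t\<in>qbasis q T. (Es ! i) (merge_basis T t w) x * cnj ((Es ! i') (merge_basis T t w') y))
        = (if x = y then \<omega> (w, i) (w', i') else 0)"
    and trace: "(\<Sum>e\<in>qbasis q (share_reg s (parties n) - T) \<times> {..<length Es}. \<omega> e e) = 1"
    using recoverable_imp_knill_laflamme[OF \<open>0 < q\<close> assms(2,4)] by blast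
  obtain \<tau> where secrecy: "\<And>u u' x y. u \<in> qbasis q (share_reg s Z) \<Longrightarrow> u' \<in> qbasis q (share_reg s Z) \<Longrightarrow>
      x \<in> qbasis q (secret_reg m) \<Longrightarrow> y \<in> qbasis q (secret_reg m) \<Longrightarrow>
      (\<Sum>w\<in>qbasis q (share_reg s (parties n) - share_reg s Z). \<Sum>i<length Es.
          (Es ! i) (merge_basis (share_reg s Z) u w) x
          * cnj ((Es ! i) (merge_basis (share_reg s Z) u' w) y))
        = (if x = y then \<tau> u u' else 0)"
    using unauthorized_imp_decoupled[OF \<open>0 < q\<close> assms(3)] by blast
  have "share_reg s Z \<subseteq> share_reg s (parties n)"
    using \<open>Z \<subseteq> parties n\<close> unfolding share_reg_def by auto
  then have "card (qbasis q (secret_reg m)) \<le> q ^ card (T - share_reg s Z)"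
    using recovery trace secrecy qbasis_nonempty[OF \<open>0 < q\<close>, of "secret_reg m"] \<open>T \<subseteq> _\<close>
    by (intro card_le_of_recoverable_and_unauthorized
        [where \<Phi> = "\<lambda>x l i. (Es ! i) l x" and I = "{..<length Es}"])
      (auto simp: share_reg_def parties_def secret_reg_def finite_qbasis)
  then have "q ^ m \<le> q ^ card (T - share_reg s Z)"
    by (simp add: card_qbasis secret_reg_def)
  then show ?thesis
    using \<open>2 \<le> q\<close> by (simp add: power_le_imp_le_exp)
qed

text \<open>Double counting: each \<open>j \<in> A\<close> lies outside exactly \<open>(d - 1) choose z\<close> of the
  \<open>d choose z\<close> subsets \<open>Z\<close>, and \<open>(d - z) * (d choose z) = d * ((d - 1) choose z)\<close>.\<close>
lemma sum_ge_of_sum_complements_ge: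
  fixes h :: "'a \<Rightarrow> nat"
  assumes "finite A" and "card A = d" and "z < d"
    and complement: "\<And>Z. Z \<subseteq> A \<Longrightarrow> card Z = z \<Longrightarrow> m \<le> (\<Sum>j\<in>A - Z. h j)"
  shows "real d * real m / real (d - z) \<le> real (\<Sum>j\<in>A. h j)"
proof -
  define S where "S = {Z. Z \<subseteq> A \<and> card Z = z}"
  have "finite S"
    unfolding S_def using \<open>finite A\<close> by (auto intro: finite_subset[of _ "Pow A"])
  have card_avoiding: "card {Z\<in>S. j \<notin> Z} = (d - 1) choose z" if "j \<in> A" for j
  proof -
    have "{Z\<in>S. j \<notin> Z} = {Z. Z \<subseteq> A - {j} \<and> card Z = z}"
      unfolding S_def by auto
    moreover have "card (A - {j}) = d - 1"
      using assms(1,2) that by simp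
    ultimately show ?thesis
      using n_subsets[of "A - {j}" z] \<open>finite A\<close> by simp
  qed
  have "(d choose z) * m = (\<Sum>Z\<in>S. m)"
    unfolding S_def using n_subsets[OF \<open>finite A\<close>] assms(2) by simp
  also have "\<dots> \<le> (\<Sum>Z\<in>S. \<Sum>j\<in>A - Z. h j)"
    by (rule sum_mono) (use complement S_def in auto)
  also have "\<dots> = (\<Sum>Z\<in>S. \<Sum>j\<in>A. if j \<notin> Z then h j else 0)"
    using \<open>finite A\<close> by (simp add: sum.inter_restrict Diff_eq)
  also have "\<dots> = (\<Sum>j\<in>A. \<Sum>Z\<in>S. if j \<notin> Z then h j else 0)"
    by (rule sum.swap)
  also have "\<dots> = (\<Sum>j\<in>A. ((d - 1) choose z) * h j)"
    by (intro sum.cong refl) (simp add: sum.inter_filter[OF \<open>finite S\<close>, symmetric] card_avoiding)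
  also have "\<dots> = ((d - 1) choose z) * (\<Sum>j\<in>A. h j)"
    by (simp add: sum_distrib_left)
  finally have "(d - z) * (d choose z) * m \<le> (d - z) * ((d - 1) choose z) * (\<Sum>j\<in>A. h j)"
    by (simp add: mult.assoc)
  then have "d * ((d - 1) choose z) * m \<le> (d - z) * ((d - 1) choose z) * (\<Sum>j\<in>A. h j)"
    by (simp only: binomial_absorb_comp)
  then have "((d - 1) choose z) * (d * m) \<le> ((d - 1) choose z) * ((d - z) * (\<Sum>j\<in>A. h j))"
    by (simp only: mult_ac)
  moreover have "0 < (d - 1) choose z"
    using \<open>z < d\<close> by simp
  ultimately have "d * m \<le> (d - z) * (\<Sum>j\<in>A. h j)"
    by simp
  then have "real d * real m \<le> real (d - z) * real (\<Sum>j\<in>A. h j)"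
    by (metis of_nat_le_iff of_nat_mult)
  with \<open>z < d\<close> show ?thesis
    by (simp add: divide_le_eq mult.commute)
qed

lemma card_diff_share_reg_eq_sum_h_sent:
  assumes "H A \<subseteq> share_reg s A" and "finite A"
  shows "card (H A - share_reg s Z) = (\<Sum>j\<in>A - Z. h_sent H j A)"
proof -
  have "H A - share_reg s Z = Sigma (A - Z) (\<lambda>j. {l. (j, l) \<in> H A})"
    using assms(1) unfolding share_reg_def by auto
  moreover have "finite {l. (j, l) \<in> H A}" for j
    using assms(1) unfolding share_reg_def by (auto intro: finite_subset[of _ "{..<s j}"])
  ultimately show ?thesis
    unfolding h_sent_def using \<open>finite A\<close> by (simp add: card_SigmaI)
qed

lemma CC_set_le_CC:
  assumes "A \<subseteq> parties n" and "card A = d"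
  shows "CC_set H A \<le> CC n H d"
proof -
  have "finite {A. A \<subseteq> parties n \<and> card A = d}"
    by (rule finite_subset[of _ "Pow (parties n)"]) (auto simp: parties_def)
  then have "finite {CC_set H A | A. A \<subseteq> parties n \<and> card A = d}"
    by (rule finite_image_set)
  then show ?thesis
    unfolding CC_def using assms by (intro Max_ge) auto
qed

lemma secret_size_le_sum_h_sent:
  assumes "2 \<le> q" and "is_QSS q t n z m s E" and "is_comm_protocol q n m s E H"
    and "A \<subseteq> parties n" "t \<le> card A" and "Z \<subseteq> A" "card Z \<le> z"
  shows "m \<le> (\<Sum>j\<in>A - Z. h_sent H j A)"
proof -
  have "finite A"
    using \<open>A \<subseteq> parties n\<close> finite_subset by (auto simp: parties_def)
  have "authorized q n m s E A" "unauthorized q n m s E Z"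
    using assms(2,4-7) unfolding is_QSS_def by auto
  then have H_A: "H A \<subseteq> share_reg s A" "recoverable_from q n m s E (H A)"
    using assms(3,4) unfolding is_comm_protocol_def by auto
  moreover have "H A \<subseteq> share_reg s (parties n)"
    using H_A(1) \<open>A \<subseteq> parties n\<close> unfolding share_reg_def by auto
  ultimately have "m \<le> card (H A - share_reg s Z)"
    using secret_size_le_card_diff_unauthorized \<open>2 \<le> q\<close> \<open>unauthorized q n m s E Z\<close> assms(4,6)
    by (meson order_trans)
  then show ?thesis
    by (simp add: card_diff_share_reg_eq_sum_h_sent[where H = H and A = A, OF H_A(1) \<open>finite A\<close>])
qed

theorem corollary3:
  fixes q t n z d m :: nat and s :: "nat \<Rightarrow> nat"
    and E :: "(nat, nat \<times> nat) qop list"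
    and H :: "nat set \<Rightarrow> (nat \<times> nat) set"
  assumes "q \<ge> 2"
    and "z < t" and "t \<le> d" and "d \<le> n"
    and "is_QSS q t n z m s E"
    and "is_comm_protocol q n m s E H"
  shows "real (CC n H d) \<ge> real d * real m / real (d - z)"
proof -
  obtain A where A: "A \<subseteq> parties n" "card A = d"
    using obtain_subset_with_card_n[of d "parties n"] \<open>d \<le> n\<close> by (auto simp: parties_def)
  then have "finite A"
    using finite_subset by (auto simp: parties_def)
  have "m \<le> (\<Sum>j\<in>A - Z. h_sent H j A)" if "Z \<subseteq> A" "card Z = z" for Z
    using secret_size_le_sum_h_sent[OF assms(1,5,6) A(1)] A(2) \<open>t \<le> d\<close> that by simp
  then have "real d * real m / real (d - z) \<le> real (CC_set H A)"
    unfolding CC_set_def using \<open>finite A\<close> A(2) \<open>z < t\<close> \<open>t \<le> d\<close>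
    by (intro sum_ge_of_sum_complements_ge) auto
  also have "\<dots> \<le> real (CC n H d)"
    using CC_set_le_CC[OF A] by simp
  finally show ?thesis .
qed

end
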